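(* Let $(\mathcal V,\mathcal W,\lambda)$ be a FTvN system with $\mathcal V$ finite dimensional, and suppose the system is orbit-transitive. If $x\prec y$, then there exists a doubly stochastic transformation $D$, which is a convex combination of elements of $\operatorname{Aut}(\mathcal V,\mathcal W,\lambda)$, such that $x=Dy$.
   Context: A Fan-Theobald-von Neumann (FTvN) system is a triple $(\mathcal V,\mathcal W,\lambda)$ where $\mathcal V,\mathcal W$ are real inner product spaces and $\lambda:\mathcal V\to\mathcal W$ is a map such that: (A1) $\|\lambda(x)\|=\|x\|$ for all $x$; (A2) $\langle x,y\rangle\le\langle\lambda(x),\lambda(y)\rangle$ for all $x,y$; (A3) for every $c\in\mathcal V$ and $q\in\lambda(\mathcal V)$ there exists $x$ with $\lambda(x)=q$ and $\langle c,x\rangle=\langle\lambda(c),\lambda(x)\rangle$. $[u]=\{z:\lambda(z)=\lambda(u)\}$; $x\prec y$ iff $x\in\operatorname{conv}[y]$. A linear map $D$ is doubly stochastic if $Dx\prec x$ for all $x$. $\operatorname{Aut}(\mathcal V,\mathcal W,\lambda)$ is the set of invertible linear maps $A$ with $\lambda(Ax)=\lambda(x)$ for all $x$. The system is orbit-transitive if $\lambda(x)=\lambda(y)$ implies $y=Ax$ for some $A\in\operatorname{Aut}(\mathcal V,\mathcal W,\lambda)$. *)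

theory Defs
  imports "HOL-Analysis.Analysis"
begin

definition FTvN :: "('v::real_inner \<Rightarrow> 'w::real_inner) \<Rightarrow> bool" where
  "FTvN lam \<longleftrightarrow>
     (\<forall>x. norm (lam x) = norm x) \<and>
     (\<forall>x y. inner x y \<le> inner (lam x) (lam y)) \<and>
     (\<forall>c q. q \<in> range lam \<longrightarrow> (\<exists>x. lam x = q \<and> inner c x = inner (lam c) (lam x)))"

definition eqclass :: "('v \<Rightarrow> 'w) \<Rightarrow> 'v \<Rightarrow> 'v set" where
  "eqclass lam u = {z. lam z = lam u}"

definition majorized :: "('v::real_vector \<Rightarrow> 'w) \<Rightarrow> 'v \<Rightarrow> 'v \<Rightarrow> bool" where
  "majorized lam x y \<longleftrightarrow> x \<in> convex hull (eqclass lam y)"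

definition doubly_stochastic :: "('v::real_vector \<Rightarrow> 'w) \<Rightarrow> ('v \<Rightarrow> 'v) \<Rightarrow> bool" where
  "doubly_stochastic lam D \<longleftrightarrow> linear D \<and> (\<forall>x. majorized lam (D x) x)"

definition Aut :: "('v::real_vector \<Rightarrow> 'w) \<Rightarrow> ('v \<Rightarrow> 'v) set" where
  "Aut lam = {A. linear A \<and> bij A \<and> (\<forall>x. lam (A x) = lam x)}"

definition orbit_transitive :: "('v::real_vector \<Rightarrow> 'w) \<Rightarrow> bool" where
  "orbit_transitive lam \<longleftrightarrow> (\<forall>x y. lam x = lam y \<longrightarrow> (\<exists>A\<in>Aut lam. y = A x))"

end

theory Submission
  imports Defs
begin

text \<open>By orbit-transitivity the class [y] is the orbit of y under Aut, so a point of conv [y] is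
  a convex combination \<open>\<Sum> u A *\<^sub>R A y\<close> of automorphisms applied to y. Conversely every convex
  combination of automorphisms D is doubly stochastic, because D z is a convex combination of
  points A z of [z].\<close>

lemma convex_hull_image_obtain_sum:
  assumes "x \<in> convex hull (f ` T)"
  obtains S u where "finite S" "S \<subseteq> T" "\<forall>s\<in>S. 0 \<le> u s" "sum u S = 1"
    "x = (\<Sum>s\<in>S. u s *\<^sub>R f s)"
proof -
  from assms obtain Z w where Z: "finite Z" "Z \<subseteq> f ` T" "\<forall>z\<in>Z. 0 \<le> w z" "sum w Z = 1"
    and x: "(\<Sum>z\<in>Z. w z *\<^sub>R z) = x"
    unfolding convex_hull_explicit by blast
  define g where "g = inv_into T f"
  have fg: "f (g z) = z" if "z \<in> Z" for z
    using Z(2) that unfolding g_def by (auto intro: f_inv_into_f)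
  have inj: "inj_on g Z"
    by (metis fg inj_onI)
  show thesis
  proof (rule that[of "g ` Z" "w \<circ> f"])
    show "finite (g ` Z)" "g ` Z \<subseteq> T"
      using Z(1,2) by (auto simp: g_def inv_into_into)
    show "\<forall>s\<in>g ` Z. 0 \<le> (w \<circ> f) s"
      using Z(3) fg by auto
    show "sum (w \<circ> f) (g ` Z) = 1"
      using Z(4) fg by (simp add: sum.reindex[OF inj])
    show "x = (\<Sum>s\<in>g ` Z. (w \<circ> f) s *\<^sub>R f s)"
      using x fg by (simp add: sum.reindex[OF inj])
  qed
qed

lemma orbit_transitive_eqclass_eq:
  assumes "orbit_transitive lam"
  shows "eqclass lam y = (\<lambda>A. A y) ` Aut lam"
proof
  show "eqclass lam y \<subseteq> (\<lambda>A. A y) ` Aut lam"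
  proof
    fix z assume "z \<in> eqclass lam y"
    then have "lam y = lam z"
      by (simp add: eqclass_def)
    then obtain A where "A \<in> Aut lam" "z = A y"
      using assms unfolding orbit_transitive_def by blast
    then show "z \<in> (\<lambda>A. A y) ` Aut lam" by blast
  qed
  show "(\<lambda>A. A y) ` Aut lam \<subseteq> eqclass lam y"
    by (auto simp: Aut_def eqclass_def)
qed

lemma doubly_stochastic_convex_combination_Aut:
  assumes "finite S" "S \<subseteq> Aut lam" "\<forall>A\<in>S. 0 \<le> u A" "sum u S = 1"
  shows "doubly_stochastic lam (\<lambda>z. \<Sum>A\<in>S. u A *\<^sub>R A z)"
  unfolding doubly_stochastic_def majorized_def
proof (intro conjI allI)
  show "linear (\<lambda>z. \<Sum>A\<in>S. u A *\<^sub>R A z)"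
    using assms(2)
    by (intro linear_compose_sum ballI real_vector.linear_compose_scale_right) (auto simp: Aut_def)
  show "(\<Sum>A\<in>S. u A *\<^sub>R A z) \<in> convex hull eqclass lam z" for z
    using assms by (intro convex_sum convex_convex_hull hull_inc) (auto simp: Aut_def eqclass_def)
qed

theorem corollary9p5:
  fixes lam :: "'v::euclidean_space \<Rightarrow> 'w::real_inner"
    and x y :: 'v
  assumes "FTvN lam"
    and "orbit_transitive lam"
    and "majorized lam x y"
  shows "\<exists>D. doubly_stochastic lam D \<and>
           (\<exists>S u. finite S \<and> S \<subseteq> Aut lam \<and> (\<forall>A\<in>S. 0 \<le> u A) \<and> sum u S = 1 \<and>
                  D = (\<lambda>z. \<Sum>A\<in>S. u A *\<^sub>R A z)) \<and>
           x = D y"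
proof -
  have "x \<in> convex hull ((\<lambda>A. A y) ` Aut lam)"
    using assms(3) orbit_transitive_eqclass_eq[OF assms(2)] by (simp add: majorized_def)
  then obtain S u where S: "finite S" "S \<subseteq> Aut lam" "\<forall>A\<in>S. 0 \<le> u A" "sum u S = 1"
    and x: "x = (\<Sum>A\<in>S. u A *\<^sub>R A y)"
    by (rule convex_hull_image_obtain_sum)
  show ?thesis
    using doubly_stochastic_convex_combination_Aut[OF S] S x by blast
qed

end
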